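(* Let $G$ be a connected graph with $n\geq 2$ vertices and $m$ edges. Then for every integer $k\geq 0$, $$R^+(S^k(G))=4^kR^+(G)+(8^k-4^k)R^*(G)+\frac{8^k-2^k}{3}m(2m-2n+1)-\frac{4^k-1}{3}(m-n)(m-n+1).$$
   Context: All graphs are finite, undirected, without loops or multiple edges. For a connected graph $H$ and vertices $i,j$, the resistance distance $\Omega_{ij}$ is the effective resistance between $i$ and $j$ in the electrical network obtained from $H$ by replacing each edge by a unit resistor. With $d_i$ the degree of vertex $i$ in $H$ and sums over unordered pairs of distinct vertices of $H$: $R^+(H)=\sum_{\{i,j\}\subseteq V(H)}(d_i+d_j)\Omega_{ij}$ (additive degree-Kirchhoff index) and $R^*(H)=\sum_{\{i,j\}\subseteq V(H)}d_id_j\Omega_{ij}$ (multiplicative degree-Kirchhoff index), with degrees and resistances taken in $H$. The subdivision $S(H)$ is the graph obtained from $H$ by replacing every edge with a path of length two. Iterated subdivisions: $S^0(G)=G$ and $S^k(G)=S(S^{k-1}(G))$ for $k\geq1$. *)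

theory Defs
  imports Complex_Main "HOL-Library.FSet"
begin

type_synonym 'a graph = "'a set \<times> 'a set set"

definition verts :: "'a graph \<Rightarrow> 'a set" where "verts H = fst H"
definition edges :: "'a graph \<Rightarrow> 'a set set" where "edges H = snd H"

definition simple_graph :: "'a graph \<Rightarrow> bool" where
  "simple_graph H \<longleftrightarrow> finite (verts H) \<and>
     (\<forall>e\<in>edges H. e \<subseteq> verts H \<and> card e = 2)"

definition adj :: "'a graph \<Rightarrow> 'a \<Rightarrow> 'a \<Rightarrow> bool" where
  "adj H u v \<longleftrightarrow> {u, v} \<in> edges H"

definition connected_graph :: "'a graph \<Rightarrow> bool" where
  "connected_graph H \<longleftrightarrow> simple_graph H \<and>
     (\<forall>u\<in>verts H. \<forall>v\<in>verts H. (adj H)\<^sup>*\<^sup>* u v)"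

definition degree :: "'a graph \<Rightarrow> 'a \<Rightarrow> nat" where
  "degree H v = card {u. adj H v u}"

text \<open>Resistance distance: inject a unit current at i and extract it at j; the
  potentials x satisfy Kirchhoff's law (unit resistors) at every vertex, and the
  effective resistance is the potential difference x i - x j.\<close>

definition resistance :: "'a graph \<Rightarrow> 'a \<Rightarrow> 'a \<Rightarrow> real" where
  "resistance H i j = (THE r. \<exists>x :: 'a \<Rightarrow> real.
      (\<forall>v\<in>verts H. (\<Sum>u\<in>{u. adj H v u}. x v - x u)
                      = (if v = i then 1 else 0) - (if v = j then 1 else 0))
      \<and> r = x i - x j)"

text \<open>Sums over unordered pairs of distinct vertices, written as half of the sum
  over ordered pairs of distinct vertices.\<close>

definition Rplus :: "'a graph \<Rightarrow> real" where
  "Rplus H = (\<Sum>i\<in>verts H. \<Sum>j\<in>verts H.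
      if i = j then 0 else real (degree H i + degree H j) * resistance H i j) / 2"

definition Rstar :: "'a graph \<Rightarrow> real" where
  "Rstar H = (\<Sum>i\<in>verts H. \<Sum>j\<in>verts H.
      if i = j then 0 else real (degree H i * degree H j) * resistance H i j) / 2"

text \<open>Vertex type closed under subdivision: original vertices, and a new vertex
  for every (subdivided) edge, named by that edge.\<close>

datatype 'a svert = Orig 'a | Mid "'a svert fset"

definition lift_graph :: "'a graph \<Rightarrow> 'a svert graph" where
  "lift_graph H = (Orig ` verts H, (\<lambda>e. Orig ` e) ` edges H)"

definition subdivision :: "'a svert graph \<Rightarrow> 'a svert graph" where
  "subdivision H = (verts H \<union> (\<lambda>e. Mid (Abs_fset e)) ` edges H,
     {{u, Mid (Abs_fset e)} | u e. e \<in> edges H \<and> u \<in> e})"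

definition iter_subdivision :: "nat \<Rightarrow> 'a graph \<Rightarrow> 'a svert graph" where
  "iter_subdivision k G = (subdivision ^^ k) (lift_graph G)"

end

theory Submission
  imports Defs "HOL-Library.Function_Algebras"
begin

text \<open>Resistances are read off from potentials: \<Omega>(i,j) = x i - x j whenever the Laplacian of x
  is the unit current from i to j, and on a connected graph such x exist and are unique up to
  constants. Doubling a potential of G on the old vertices and giving the new vertex of an edge
  the sum of the values at its ends yields a potential of S(G), so resistances between old
  vertices double; injecting an extra half unit at a new vertex gives closed forms for the
  remaining resistances in terms of resistance sums over the ends of edges. Summing these with
  the handshake lemma and Foster's theorem (the edge resistances of G add up to n - 1) gives
  R+(S G) = 4 R+(G) + 4 R*(G) + 3m^2 - 2mn + m - n^2 + n and R*(S G) = 8 R*(G) + 2m(2m - 2n + 1).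
  Since S(G) has n + m vertices and 2m edges, the formula follows by induction on k.\<close>

section \<open>Simple graphs\<close>

definition neighbours :: "'a graph \<Rightarrow> 'a \<Rightarrow> 'a set" where
  "neighbours H v = {u. adj H v u}"

lemma degree_eq_card_neighbours: "degree H v = card (neighbours H v)"
  by (simp add: degree_def neighbours_def)

lemma adj_sym: "adj H u v \<Longrightarrow> adj H v u"
  by (simp add: adj_def insert_commute)

lemma adj_in_verts: "simple_graph H \<Longrightarrow> adj H u v \<Longrightarrow> u \<in> verts H \<and> v \<in> verts H"
  unfolding simple_graph_def adj_def by auto

lemma adj_distinct: "simple_graph H \<Longrightarrow> adj H u v \<Longrightarrow> u \<noteq> v"
  unfolding simple_graph_def adj_def by force

lemma finite_verts: "simple_graph H \<Longrightarrow> finite (verts H)"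
  by (simp add: simple_graph_def)

lemma finite_edges: "simple_graph H \<Longrightarrow> finite (edges H)"
  unfolding simple_graph_def by (meson Pow_iff finite_Pow_iff finite_subset subsetI)

lemma card_edge: "simple_graph H \<Longrightarrow> e \<in> edges H \<Longrightarrow> card e = 2"
  unfolding simple_graph_def by blast

lemma edge_subset_verts: "simple_graph H \<Longrightarrow> e \<in> edges H \<Longrightarrow> e \<subseteq> verts H"
  unfolding simple_graph_def by blast

lemma finite_edge: "simple_graph H \<Longrightarrow> e \<in> edges H \<Longrightarrow> finite e"
  using card_edge by (metis card.infinite zero_neq_numeral)

lemma edge_nonempty: "simple_graph H \<Longrightarrow> e \<in> edges H \<Longrightarrow> \<exists>v. v \<in> e"
  using card_edge[of H e] by (metis card.empty ex_in_conv zero_neq_numeral)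

lemma edge_obtain_other:
  assumes "simple_graph H" "e \<in> edges H" "v \<in> e"
  obtains u where "e = {v, u}" "u \<noteq> v"
  using card_edge[OF assms(1,2)] assms(3) unfolding card_2_iff by (metis insert_commute insertE singletonD)

lemma neighbours_subset_verts: "simple_graph H \<Longrightarrow> neighbours H v \<subseteq> verts H"
  using adj_in_verts by (fastforce simp: neighbours_def)

lemma finite_neighbours: "simple_graph H \<Longrightarrow> finite (neighbours H v)"
  using neighbours_subset_verts finite_verts finite_subset by metis

lemma sum_neighbours_swap:
  assumes H: "simple_graph H"
  shows "(\<Sum>v\<in>verts H. \<Sum>u\<in>neighbours H v. f v u) = (\<Sum>v\<in>verts H. \<Sum>u\<in>neighbours H v. f u v)"
proof -
  have out: "neighbours H v = {u. u \<in> verts H \<and> adj H v u}" for v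
    using adj_in_verts[OF H] by (auto simp: neighbours_def)
  have inc: "neighbours H v = {u. u \<in> verts H \<and> adj H u v}" for v
    using adj_in_verts[OF H] by (auto simp: neighbours_def intro: adj_sym)
  show ?thesis unfolding out
    by (subst sum.swap_restrict) (use finite_verts[OF H] in \<open>auto simp: inc[symmetric] out[symmetric]\<close>)
qed

lemma sum_neighbours_eq_sum_incident_edges:
  assumes H: "simple_graph H"
  shows "(\<Sum>u\<in>neighbours H v. \<phi> {v, u}) = (\<Sum>e\<in>{e\<in>edges H. v \<in> e}. \<phi> e)"
proof -
  have inj: "inj_on (\<lambda>u. {v, u}) (neighbours H v)"
    unfolding inj_on_def by (metis doubleton_eq_iff)
  have "(\<lambda>u. {v, u}) ` neighbours H v = {e\<in>edges H. v \<in> e}"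
  proof (intro subset_antisym subsetI)
    fix e assume "e \<in> {e\<in>edges H. v \<in> e}"
    then obtain u where "e = {v, u}" "e \<in> edges H"
      using edge_obtain_other[OF H] by blast
    then show "e \<in> (\<lambda>u. {v, u}) ` neighbours H v" by (auto simp: neighbours_def adj_def)
  qed (auto simp: neighbours_def adj_def)
  then show ?thesis using sum.reindex[OF inj, of \<phi>] by simp
qed

lemma degree_eq_card_incident_edges:
  "simple_graph H \<Longrightarrow> real (degree H v) = real (card {e\<in>edges H. v \<in> e})"
  using sum_neighbours_eq_sum_incident_edges[where \<phi>="\<lambda>_. 1::real" and v=v]
  by (simp add: degree_eq_card_neighbours)

lemma sum_neighbours_eq_double_sum_edges:
  assumes H: "simple_graph H"
  shows "(\<Sum>v\<in>verts H. \<Sum>u\<in>neighbours H v. \<phi> {v, u}) = 2 * (\<Sum>e\<in>edges H. (\<phi> e :: real))"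
proof -
  have "(\<Sum>v\<in>verts H. \<Sum>u\<in>neighbours H v. \<phi> {v, u})
      = (\<Sum>v\<in>verts H. \<Sum>e\<in>{e\<in>edges H. v \<in> e}. \<phi> e)"
    by (intro sum.cong refl) (rule sum_neighbours_eq_sum_incident_edges[OF H])
  also have "\<dots> = (\<Sum>e\<in>edges H. \<Sum>v\<in>{v\<in>verts H. v \<in> e}. \<phi> e)"
    by (rule sum.swap_restrict) (use finite_verts[OF H] finite_edges[OF H] in auto)
  also have "\<dots> = (\<Sum>e\<in>edges H. 2 * \<phi> e)"
  proof (rule sum.cong[OF refl])
    fix e assume e: "e \<in> edges H"
    then have "{v\<in>verts H. v \<in> e} = e" using edge_subset_verts[OF H] by blast
    then show "(\<Sum>v\<in>{v\<in>verts H. v \<in> e}. \<phi> e) = 2 * \<phi> e" using card_edge[OF H e] by simp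
  qed
  finally show ?thesis by (simp add: sum_distrib_left)
qed

lemma handshake:
  assumes H: "simple_graph H"
  shows "(\<Sum>e\<in>edges H. \<Sum>x\<in>e. f x) = (\<Sum>v\<in>verts H. real (degree H v) * (f v :: real))"
proof -
  have "2 * (\<Sum>e\<in>edges H. \<Sum>x\<in>e. f x) = (\<Sum>v\<in>verts H. \<Sum>u\<in>neighbours H v. f v + f u)"
    using sum_neighbours_eq_double_sum_edges[OF H, of "\<lambda>e. \<Sum>x\<in>e. f x"] adj_distinct[OF H]
    by (simp add: neighbours_def)
  also have "\<dots> = (\<Sum>v\<in>verts H. \<Sum>u\<in>neighbours H v. f v) + (\<Sum>v\<in>verts H. \<Sum>u\<in>neighbours H v. f u)"
    by (simp add: sum.distrib)
  also have "(\<Sum>v\<in>verts H. \<Sum>u\<in>neighbours H v. f u) = (\<Sum>v\<in>verts H. \<Sum>u\<in>neighbours H v. f v)"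
    using sum_neighbours_swap[OF H, of "\<lambda>v u. f u"] by simp
  finally show ?thesis by (simp add: degree_eq_card_neighbours)
qed

lemma sum_degree:
  assumes H: "simple_graph H"
  shows "(\<Sum>v\<in>verts H. real (degree H v)) = 2 * real (card (edges H))"
proof -
  have "(\<Sum>e\<in>edges H. real (card e)) = (\<Sum>e\<in>edges H. 2)"
    using card_edge[OF H] by (intro sum.cong) auto
  then show ?thesis using handshake[OF H, of "\<lambda>_. 1"] by simp
qed

section \<open>The graph Laplacian\<close>

definition laplacian :: "'a graph \<Rightarrow> ('a \<Rightarrow> real) \<Rightarrow> 'a \<Rightarrow> real" where
  "laplacian H x v = (\<Sum>u\<in>neighbours H v. x v - x u)"

definition unit_potential :: "'a graph \<Rightarrow> 'a \<Rightarrow> 'a \<Rightarrow> ('a \<Rightarrow> real) \<Rightarrow> bool" where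
  "unit_potential H i j x \<longleftrightarrow>
     (\<forall>v\<in>verts H. laplacian H x v = (if v = i then 1 else 0) - (if v = j then 1 else 0))"

lemma laplacian_diff: "laplacian H (\<lambda>v. x v - y v) w = laplacian H x w - laplacian H y w"
  unfolding laplacian_def sum_subtractf[symmetric] by (rule sum.cong) auto

lemma laplacian_add: "laplacian H (\<lambda>v. x v + y v) w = laplacian H x w + laplacian H y w"
  unfolding laplacian_def sum.distrib[symmetric] by (rule sum.cong) auto

lemma laplacian_scale: "laplacian H (\<lambda>v. c * x v) w = c * laplacian H x w"
  unfolding laplacian_def sum_distrib_left by (rule sum.cong) (auto simp: algebra_simps)

lemma laplacian_sum: "laplacian H (\<lambda>v. \<Sum>s\<in>A. x s v) w = (\<Sum>s\<in>A. laplacian H (x s) w)"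
  unfolding laplacian_def sum_subtractf[symmetric] by (rule sum.swap)

lemma laplacian_eq_sum_incident_edges:
  assumes H: "simple_graph H"
  shows "laplacian H x v = (\<Sum>e\<in>{e\<in>edges H. v \<in> e}. \<Sum>w\<in>e. x v - x w)"
proof -
  have "laplacian H x v = (\<Sum>u\<in>neighbours H v. \<Sum>w\<in>{v, u}. x v - x w)"
    unfolding laplacian_def using adj_distinct[OF H] by (intro sum.cong) (auto simp: neighbours_def)
  then show ?thesis using sum_neighbours_eq_sum_incident_edges[OF H] by simp
qed

lemma sum_laplacian: "simple_graph H \<Longrightarrow> (\<Sum>v\<in>verts H. laplacian H x v) = 0"
  using sum_neighbours_swap[of H "\<lambda>v u. x u"] by (simp add: laplacian_def sum_subtractf)

lemma laplacian_self_adjoint: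
  assumes H: "simple_graph H"
  shows "(\<Sum>v\<in>verts H. x v * laplacian H y v) = (\<Sum>v\<in>verts H. y v * laplacian H x v)"
proof -
  have expand: "(\<Sum>v\<in>verts H. x v * laplacian H y v)
      = (\<Sum>v\<in>verts H. \<Sum>u\<in>neighbours H v. x v * y v) - (\<Sum>v\<in>verts H. \<Sum>u\<in>neighbours H v. x v * y u)"
    for x y unfolding laplacian_def by (simp add: sum_distrib_left sum_subtractf algebra_simps)
  show ?thesis
    unfolding expand sum_neighbours_swap[OF H, of "\<lambda>v u. x v * y u"] by (simp add: mult.commute)
qed

lemma laplacian_off_vertex:
  assumes H: "simple_graph H" and r: "r \<in> verts H" and b: "(\<Sum>v\<in>verts H. b v) = 0"
    and x: "\<forall>v\<in>verts H - {r}. laplacian H x v = b v"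
  shows "\<forall>v\<in>verts H. laplacian H x v = b v"
proof -
  have "(\<Sum>v\<in>verts H. laplacian H x v) = laplacian H x r + (\<Sum>v\<in>verts H - {r}. b v)"
    using r x finite_verts[OF H] by (simp add: sum.remove)
  moreover have "(\<Sum>v\<in>verts H. b v) = b r + (\<Sum>v\<in>verts H - {r}. b v)"
    using r finite_verts[OF H] by (simp add: sum.remove)
  ultimately have "laplacian H x r = b r" using sum_laplacian[OF H, of x] b by simp
  then show ?thesis using x by blast
qed

lemma sum_times_indicator:
  "finite A \<Longrightarrow> (\<Sum>v\<in>A. y v * (if v = i then 1 else 0)) = (if i \<in> A then y i else (0::real))"
  by (subst sum.cong[OF refl, of _ _ "\<lambda>v. if v = i then y v else 0"]) auto

lemma sum_times_laplacian_unit_potential: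
  assumes "simple_graph H" "unit_potential H i j x" "i \<in> verts H" "j \<in> verts H"
  shows "(\<Sum>v\<in>verts H. y v * laplacian H x v) = y i - y j"
  using assms finite_verts[OF assms(1)] unfolding unit_potential_def
  by (simp add: right_diff_distrib sum_subtractf sum_times_indicator)

lemma unit_potential_diff:
  "unit_potential H a w x \<Longrightarrow> unit_potential H b w y \<Longrightarrow> unit_potential H a b (\<lambda>v. x v - y v)"
  by (simp add: unit_potential_def laplacian_diff)

lemma unit_potential_swap: "unit_potential H i j x \<Longrightarrow> unit_potential H j i (\<lambda>v. - x v)"
  using laplacian_scale[of H "-1" x] by (simp add: unit_potential_def)

section \<open>Potentials on connected graphs\<close>

lemma connected_harmonic_constant:
  assumes conn: "connected_graph H" and harmonic: "\<forall>v\<in>verts H. laplacian H x v = 0"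
    and u: "u \<in> verts H" and v: "v \<in> verts H"
  shows "x u = x v"
proof -
  have H: "simple_graph H" using conn by (simp add: connected_graph_def)
  have fin: "finite (verts H)" using finite_verts[OF H] .
  define M where "M = Max (x ` verts H)"
  have "M \<in> x ` verts H" unfolding M_def using fin u by (intro Max_in) auto
  then obtain v0 where v0: "v0 \<in> verts H" "x v0 = M" by auto
  have le_M: "x t \<le> M" if "t \<in> verts H" for t
    unfolding M_def using fin that by auto
  \<comment> \<open>maximum principle: the maximum propagates along edges\<close>
  have attains_max: "x t = M" if "(adj H)\<^sup>*\<^sup>* v0 t" for t
    using that
  proof (induction rule: rtranclp_induct)
    case base then show ?case using v0 by simp
  next
    case (step a b)
    have a: "a \<in> verts H" using adj_in_verts[OF H step(2)] by simp
    have "laplacian H x a = 0" using harmonic a by blast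
    then have "(\<Sum>u\<in>neighbours H a. M - x u) = 0"
      using step(3) by (simp add: laplacian_def)
    moreover have "\<forall>u\<in>neighbours H a. 0 \<le> M - x u"
      using le_M neighbours_subset_verts[OF H] by (simp add: subset_iff)
    ultimately have "\<forall>u\<in>neighbours H a. M - x u = 0"
      using sum_nonneg_eq_0_iff[OF finite_neighbours[OF H], of a "\<lambda>u. M - x u"] by simp
    then show ?case using step(2) by (simp add: neighbours_def)
  qed
  moreover have "(adj H)\<^sup>*\<^sup>* v0 u" "(adj H)\<^sup>*\<^sup>* v0 v"
    using conn u v v0(1) unfolding connected_graph_def by blast+
  ultimately show ?thesis by simp
qed

definition scale_fun :: "real \<Rightarrow> ('a \<Rightarrow> real) \<Rightarrow> 'a \<Rightarrow> real" where
  "scale_fun c x = (\<lambda>v. c * x v)"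

interpretation fun_vs: vector_space "scale_fun :: real \<Rightarrow> ('a \<Rightarrow> real) \<Rightarrow> _"
  by unfold_locales (auto simp: scale_fun_def fun_eq_iff algebra_simps)

lemma (in vector_space) span_subset_image_if_inj_on_span:
  assumes lin: "Vector_Spaces.linear scale scale f" and B: "finite B"
    and maps: "f ` span B \<subseteq> span B" and inj: "inj_on f (span B)"
  shows "span B \<subseteq> f ` span B"
proof -
  interpret f: Vector_Spaces.linear scale scale f by (rule lin)
  obtain C where C: "C \<subseteq> B" "independent C" "B \<subseteq> span C" "card C = dim B"
    by (rule basis_exists)
  have "span B \<subseteq> span C" using span_mono[OF C(3)] by (simp add: span_span)
  then have span_C: "span C = span B" using span_mono[OF C(1)] by (rule subset_antisym[rotated])
  have fin_C: "finite C" using B C(1) by (rule finite_subset[rotated])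
  have inj_C: "inj_on f (span C)" using inj span_C by simp
  have indep: "independent (f ` C)" using f.independent_injective_image[OF C(2) inj_C] .
  have card: "card (f ` C) = card C" using inj_on_subset[OF inj_C span_superset] by (rule card_image)
  have image_C: "f ` C \<subseteq> span C"
    using image_mono[OF span_superset[of C], of f] maps span_C by simp
  have "span C \<subseteq> span (f ` C)"
  proof
    fix b assume b: "b \<in> span C"
    show "b \<in> span (f ` C)"
    proof (rule ccontr)
      assume nb: "b \<notin> span (f ` C)"
      have "independent (insert b (f ` C))" using independent_insertI[OF nb indep] .
      moreover have "insert b (f ` C) \<subseteq> span C" using b image_C by simp
      ultimately have "card (insert b (f ` C)) \<le> card C"
        using independent_span_bound[OF fin_C] by simp
      moreover have "b \<notin> f ` C" using nb span_base[of b "f ` C"] by blast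
      ultimately show False using card fin_C by simp
    qed
  qed
  then show ?thesis using f.span_image[of C] span_C by simp
qed

lemma span_indicator_functions:
  assumes A: "finite A"
  shows "fun_vs.span ((\<lambda>a v. if v = a then 1 else 0) ` A) = {x. \<forall>v. v \<notin> A \<longrightarrow> x v = 0}"
    (is "fun_vs.span (?\<delta> ` A) = ?supported")
proof
  have "fun_vs.subspace ?supported"
    unfolding fun_vs.subspace_def by (auto simp: scale_fun_def)
  moreover have "?\<delta> ` A \<subseteq> ?supported" by auto
  ultimately show "fun_vs.span (?\<delta> ` A) \<subseteq> ?supported"
    by (rule fun_vs.span_minimal[rotated])
next
  show "?supported \<subseteq> fun_vs.span (?\<delta> ` A)"
  proof
    fix x assume x: "x \<in> ?supported"
    have sum_apply: "(\<Sum>a\<in>A. scale_fun (x a) (?\<delta> a)) v = (\<Sum>a\<in>A. x a * ?\<delta> a v)" for v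
      by (induction A rule: infinite_finite_induct) (auto simp: scale_fun_def)
    have expand: "x v = (\<Sum>a\<in>A. x a * ?\<delta> a v)" for v
    proof -
      have "(\<Sum>a\<in>A. x a * ?\<delta> a v) = (\<Sum>a\<in>A. x a * (if a = v then 1 else 0))"
        by (intro sum.cong) auto
      then show ?thesis using sum_times_indicator[OF A, of x v] x by auto
    qed
    have "x = (\<Sum>a\<in>A. scale_fun (x a) (?\<delta> a))"
      unfolding fun_eq_iff sum_apply by (rule allI expand)+
    also have "\<dots> \<in> fun_vs.span (?\<delta> ` A)"
      by (intro fun_vs.span_sum fun_vs.span_scale fun_vs.span_base) auto
    finally show "x \<in> fun_vs.span (?\<delta> ` A)" .
  qed
qed

lemma laplacian_surjective_off_vertex:
  assumes conn: "connected_graph H" and r: "r \<in> verts H"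
  shows "\<exists>x. \<forall>v\<in>verts H - {r}. laplacian H x v = b v"
proof -
  have H: "simple_graph H" using conn by (simp add: connected_graph_def)
  define V0 where "V0 = verts H - {r}"
  have fin: "finite V0" using finite_verts[OF H] by (simp add: V0_def)
  define B where "B = (\<lambda>a v. if v = a then 1 else (0::real)) ` V0"
  define T where "T x = (\<lambda>v. if v \<in> V0 then laplacian H x v else 0)" for x
  have span_B: "fun_vs.span B = {x. \<forall>v. v \<notin> V0 \<longrightarrow> x v = 0}"
    unfolding B_def by (rule span_indicator_functions[OF fin])
  have lin: "Vector_Spaces.linear scale_fun scale_fun T"
    unfolding Vector_Spaces.linear_iff
    using laplacian_add[of H] laplacian_scale[of H]
    by (auto simp: fun_vs.vector_space_axioms T_def scale_fun_def fun_eq_iff plus_fun_def)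
  have maps: "T ` fun_vs.span B \<subseteq> fun_vs.span B" by (auto simp: span_B T_def)
  \<comment> \<open>T is injective on the functions vanishing at r (a difference with Laplacian zero off r is
    harmonic, hence constant), so by finite dimension it maps them onto themselves\<close>
  have "inj_on T (fun_vs.span B)"
  proof (rule inj_onI)
    fix x y assume x: "x \<in> fun_vs.span B" and y: "y \<in> fun_vs.span B" and eq: "T x = T y"
    have "\<forall>v\<in>verts H - {r}. laplacian H (\<lambda>v. x v - y v) v = 0"
    proof
      fix v assume "v \<in> verts H - {r}"
      then show "laplacian H (\<lambda>v. x v - y v) v = 0"
        using fun_cong[OF eq, of v] by (simp add: laplacian_diff T_def V0_def)
    qed
    then have "\<forall>v\<in>verts H. laplacian H (\<lambda>v. x v - y v) v = 0"
      using laplacian_off_vertex[OF H r, of "\<lambda>_. 0"] by simp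
    then have diff_const: "x v - y v = x r - y r" if "v \<in> verts H" for v
      using connected_harmonic_constant[OF conn _ that r] by blast
    have vanish: "x v = 0 \<and> y v = 0" if "v \<notin> V0" for v
      using x y that by (simp add: span_B)
    show "x = y"
    proof
      fix v
      show "x v = y v"
        using diff_const[of v] vanish[of v] vanish[of r] by (cases "v \<in> V0") (auto simp: V0_def)
    qed
  qed
  then have "fun_vs.span B \<subseteq> T ` fun_vs.span B"
    using fun_vs.span_subset_image_if_inj_on_span[OF lin _ maps] fin by (simp add: B_def)
  moreover have "(\<lambda>v. if v \<in> V0 then b v else 0) \<in> fun_vs.span B" by (simp add: span_B)
  ultimately obtain x where "(\<lambda>v. if v \<in> V0 then b v else 0) = T x" by blast
  then show ?thesis unfolding T_def V0_def fun_eq_iff by metis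
qed

lemma connected_unit_potential_exists:
  assumes conn: "connected_graph H" and i: "i \<in> verts H" and j: "j \<in> verts H"
  shows "\<exists>x. unit_potential H i j x"
proof -
  have H: "simple_graph H" using conn by (simp add: connected_graph_def)
  define b where "b v = (if v = i then 1 else 0) - (if v = j then (1::real) else 0)" for v
  obtain x where "\<forall>v\<in>verts H - {i}. laplacian H x v = b v"
    using laplacian_surjective_off_vertex[OF conn i] by blast
  moreover have "(\<Sum>v\<in>verts H. b v) = 0"
    using i j finite_verts[OF H] by (simp add: b_def sum_subtractf)
  ultimately have "\<forall>v\<in>verts H. laplacian H x v = b v"
    using laplacian_off_vertex[OF H i] by blast
  then show ?thesis unfolding unit_potential_def b_def by blast
qed

section \<open>Resistance distance\<close>

lemma resistance_eq_The_unit_potential: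
  "resistance H i j = (THE r. \<exists>x. unit_potential H i j x \<and> r = x i - x j)"
  unfolding resistance_def unit_potential_def laplacian_def neighbours_def ..

lemma resistance_self: "resistance H i i = 0"
  unfolding resistance_eq_The_unit_potential
proof (rule the_equality)
  show "\<exists>x. unit_potential H i i x \<and> 0 = x i - x i"
    by (rule exI[of _ "\<lambda>_. 0"]) (simp add: unit_potential_def laplacian_def)
qed auto

lemma resistance_eq_unit_potential:
  assumes conn: "connected_graph H" and i: "i \<in> verts H" and j: "j \<in> verts H"
    and x: "unit_potential H i j x"
  shows "resistance H i j = x i - x j"
  unfolding resistance_eq_The_unit_potential
proof (rule the_equality)
  show "\<exists>y. unit_potential H i j y \<and> x i - x j = y i - y j" using x by blast
next
  fix r assume "\<exists>y. unit_potential H i j y \<and> r = y i - y j"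
  then obtain y where y: "unit_potential H i j y" "r = y i - y j" by blast
  have "\<forall>v\<in>verts H. laplacian H (\<lambda>v. y v - x v) v = 0"
    using y(1) x by (simp add: unit_potential_def laplacian_diff)
  then have "y i - x i = y j - x j" using connected_harmonic_constant[OF conn _ i j] by blast
  then show "r = x i - x j" using y(2) by simp
qed

lemma resistance_sym:
  assumes conn: "connected_graph H" and i: "i \<in> verts H" and j: "j \<in> verts H"
  shows "resistance H i j = resistance H j i"
proof -
  obtain x where x: "unit_potential H i j x" using connected_unit_potential_exists[OF conn i j] by blast
  show ?thesis
    using resistance_eq_unit_potential[OF conn i j x]
      resistance_eq_unit_potential[OF conn j i unit_potential_swap[OF x]] by simp
qed

text \<open>By reciprocity, the potential at p of a unit current from a to w equals the potential
  at a of a unit current from p to w.\<close>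

lemma unit_potential_value:
  assumes conn: "connected_graph H" and a: "a \<in> verts H" and p: "p \<in> verts H" and w: "w \<in> verts H"
    and x: "unit_potential H a w x"
  shows "x p - x w = (resistance H a w + resistance H p w - resistance H a p) / 2"
proof -
  have H: "simple_graph H" using conn by (simp add: connected_graph_def)
  obtain y where y: "unit_potential H p w y" using connected_unit_potential_exists[OF conn p w] by blast
  have "x p - x w = y a - y w"
    using laplacian_self_adjoint[OF H, of x y] sum_times_laplacian_unit_potential[OF H y p w, of x]
      sum_times_laplacian_unit_potential[OF H x a w, of y] by simp
  moreover have "resistance H a p = (x a - y a) - (x p - y p)"
    using resistance_eq_unit_potential[OF conn a p unit_potential_diff[OF x y]] .
  moreover have "resistance H a w = x a - x w" using resistance_eq_unit_potential[OF conn a w x] .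
  moreover have "resistance H p w = y p - y w" using resistance_eq_unit_potential[OF conn p w y] .
  ultimately show ?thesis by simp
qed

definition resistance_between :: "'a graph \<Rightarrow> 'a set \<Rightarrow> 'a set \<Rightarrow> real" where
  "resistance_between H A B = (\<Sum>s\<in>A. \<Sum>t\<in>B. resistance H s t)"

lemma resistance_between_sym:
  assumes "connected_graph H" "A \<subseteq> verts H" "B \<subseteq> verts H"
  shows "resistance_between H A B = resistance_between H B A"
proof -
  have "resistance_between H A B = (\<Sum>s\<in>A. \<Sum>t\<in>B. resistance H t s)"
    unfolding resistance_between_def
    by (intro sum.cong refl resistance_sym[OF assms(1)]) (use assms in auto)
  also have "\<dots> = resistance_between H B A" unfolding resistance_between_def by (rule sum.swap)
  finally show ?thesis .
qed

lemma resistance_between_pair: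
  assumes conn: "connected_graph H" and "u \<in> verts H" "v \<in> verts H" "u \<noteq> v"
  shows "resistance_between H {u, v} {u, v} = 2 * resistance H u v"
proof -
  have "resistance H v u = resistance H u v" using assms by (intro resistance_sym[OF conn])
  then show ?thesis using assms(4) by (simp add: resistance_between_def resistance_self)
qed

lemma foster_sum_neighbours:
  assumes conn: "connected_graph H" and r: "r \<in> verts H"
  shows "(\<Sum>v\<in>verts H. \<Sum>u\<in>neighbours H v. resistance H v u) = 2 * (real (card (verts H)) - 1)"
proof -
  have H: "simple_graph H" using conn by (simp add: connected_graph_def)
  define P where "P s = (SOME x. unit_potential H s r x)" for s
  have P: "unit_potential H s r (P s)" if "s \<in> verts H" for s
    unfolding P_def using connected_unit_potential_exists[OF conn that r] by (rule someI_ex)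
  \<comment> \<open>the Laplacian of the potential of a unit current from v to r, evaluated at v\<close>
  have at_source: "(\<Sum>u\<in>neighbours H v. resistance H v u + resistance H v r - resistance H u r)
      = 2 - 2 * (if v = r then 1 else 0)" if v: "v \<in> verts H" for v
  proof -
    have "P v v - P v u = (resistance H v u + resistance H v r - resistance H u r) / 2"
      if "u \<in> neighbours H v" for u
    proof -
      have u: "u \<in> verts H" using that neighbours_subset_verts[OF H] by blast
      show ?thesis
        using unit_potential_value[OF conn v v r P[OF v]] unit_potential_value[OF conn v u r P[OF v]]
        by (simp add: resistance_self)
    qed
    then have "(\<Sum>u\<in>neighbours H v. resistance H v u + resistance H v r - resistance H u r)
        = 2 * laplacian H (P v) v"
      unfolding laplacian_def sum_distrib_left by (intro sum.cong) (auto simp: field_simps)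
    then show ?thesis using P[OF v] v by (simp add: unit_potential_def)
  qed
  have "(\<Sum>v\<in>verts H. \<Sum>u\<in>neighbours H v. resistance H v r - resistance H u r) = 0"
    using sum_neighbours_swap[OF H, of "\<lambda>v u. resistance H u r"] by (simp add: sum_subtractf)
  moreover have "(\<Sum>v\<in>verts H. \<Sum>u\<in>neighbours H v. resistance H v u + resistance H v r - resistance H u r)
      = (\<Sum>v\<in>verts H. \<Sum>u\<in>neighbours H v. resistance H v u)
        + (\<Sum>v\<in>verts H. \<Sum>u\<in>neighbours H v. resistance H v r - resistance H u r)"
    by (simp only: sum.distrib[symmetric] add_diff_eq)
  ultimately have "(\<Sum>v\<in>verts H. \<Sum>u\<in>neighbours H v. resistance H v u)
      = (\<Sum>v\<in>verts H. \<Sum>u\<in>neighbours H v. resistance H v u + resistance H v r - resistance H u r)"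
    by simp
  also have "\<dots> = (\<Sum>v\<in>verts H. 2 - 2 * (if v = r then 1 else 0))"
    using at_source by simp
  also have "\<dots> = 2 * (real (card (verts H)) - 1)"
    using r finite_verts[OF H] by (simp add: sum_subtractf sum_distrib_left[symmetric])
  finally show ?thesis .
qed

theorem foster:
  assumes conn: "connected_graph H" and nonempty: "verts H \<noteq> {}"
  shows "(\<Sum>e\<in>edges H. resistance_between H e e) = 2 * (real (card (verts H)) - 1)"
proof -
  have H: "simple_graph H" using conn by (simp add: connected_graph_def)
  obtain r where r: "r \<in> verts H" using nonempty by blast
  have "(\<Sum>v\<in>verts H. \<Sum>u\<in>neighbours H v. resistance_between H {v, u} {v, u})
      = 2 * (\<Sum>v\<in>verts H. \<Sum>u\<in>neighbours H v. resistance H v u)"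
    unfolding sum_distrib_left
    using neighbours_subset_verts[OF H] adj_distinct[OF H]
    by (intro sum.cong refl resistance_between_pair[OF conn]) (auto simp: neighbours_def)
  then show ?thesis
    using sum_neighbours_eq_double_sum_edges[OF H, of "\<lambda>e. resistance_between H e e"]
      foster_sum_neighbours[OF conn r] by simp
qed

lemma Rplus_eq_sum_degree_resistance:
  assumes conn: "connected_graph H"
  shows "Rplus H = (\<Sum>x\<in>verts H. \<Sum>y\<in>verts H. real (degree H x) * resistance H x y)"
proof -
  have "Rplus H = (\<Sum>x\<in>verts H. \<Sum>y\<in>verts H. real (degree H x + degree H y) * resistance H x y) / 2"
    unfolding Rplus_def by (intro arg_cong[where f="\<lambda>a. a / 2"] sum.cong refl) (simp add: resistance_self)
  also have "\<dots> = ((\<Sum>x\<in>verts H. \<Sum>y\<in>verts H. real (degree H x) * resistance H x y)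
       + (\<Sum>x\<in>verts H. \<Sum>y\<in>verts H. real (degree H y) * resistance H x y)) / 2"
    by (simp add: sum.distrib algebra_simps)
  also have "(\<Sum>x\<in>verts H. \<Sum>y\<in>verts H. real (degree H y) * resistance H x y)
      = (\<Sum>x\<in>verts H. \<Sum>y\<in>verts H. real (degree H x) * resistance H x y)"
    by (subst sum.swap) (intro sum.cong refl arg_cong[where f="\<lambda>r. _ * r"] resistance_sym[OF conn])
  finally show ?thesis by simp
qed

lemma Rstar_eq_sum_degree_resistance:
  "Rstar H = (\<Sum>x\<in>verts H. \<Sum>y\<in>verts H. real (degree H x) * real (degree H y) * resistance H x y) / 2"
  unfolding Rstar_def by (intro arg_cong[where f="\<lambda>a. a / 2"] sum.cong refl) (simp add: resistance_self)

lemma half_unit_current_potential: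
  assumes conn: "connected_graph H" and e0: "e0 \<in> edges H" and w: "w \<in> verts H"
  obtains z where
    "\<forall>v\<in>verts H. laplacian H z v = (if v \<in> e0 then 1/2 else 0) - (if v = w then 1 else 0)"
    "\<And>t. t \<in> verts H \<Longrightarrow> z t - z w
       = (resistance_between H e0 {w} + 2 * resistance H t w - resistance_between H e0 {t}) / 4"
proof -
  have H: "simple_graph H" using conn by (simp add: connected_graph_def)
  have e0_verts: "e0 \<subseteq> verts H" and card_e0: "card e0 = 2" and fin_e0: "finite e0"
    using edge_subset_verts[OF H e0] card_edge[OF H e0] finite_edge[OF H e0] by auto
  define P where "P s = (SOME x. unit_potential H s w x)" for s
  have P: "unit_potential H s w (P s)" if "s \<in> verts H" for s
    unfolding P_def using connected_unit_potential_exists[OF conn that w] by (rule someI_ex)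
  define z where "z v = (1/2) * (\<Sum>s\<in>e0. P s v)" for v
  have "laplacian H z v = (if v \<in> e0 then 1/2 else 0) - (if v = w then 1 else 0)"
    if v: "v \<in> verts H" for v
  proof -
    have "laplacian H z v = (1/2) * (\<Sum>s\<in>e0. laplacian H (P s) v)"
      unfolding z_def laplacian_scale laplacian_sum ..
    also have "\<dots> = (1/2) * (\<Sum>s\<in>e0. (if v = s then 1 else 0) - (if v = w then 1 else 0))"
      using P e0_verts v by (intro arg_cong[where f="\<lambda>a. (1/2) * a"] sum.cong refl)
        (auto simp: unit_potential_def)
    also have "\<dots> = (if v \<in> e0 then 1/2 else 0) - (if v = w then 1 else 0)"
      using fin_e0 card_e0 by (simp add: sum_subtractf)
    finally show ?thesis .
  qed
  moreover have "z t - z w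
      = (resistance_between H e0 {w} + 2 * resistance H t w - resistance_between H e0 {t}) / 4"
    if t: "t \<in> verts H" for t
  proof -
    have "z t - z w = (1/2) * (\<Sum>s\<in>e0. P s t - P s w)"
      by (simp add: z_def sum_subtractf right_diff_distrib)
    also have "\<dots> = (1/2) * (\<Sum>s\<in>e0. (resistance H s w + resistance H t w - resistance H s t) / 2)"
      using unit_potential_value[OF conn _ t w P] e0_verts by (intro arg_cong[where f="\<lambda>a. (1/2) * a"] sum.cong) auto
    also have "\<dots> = (resistance_between H e0 {w} + 2 * resistance H t w - resistance_between H e0 {t}) / 4"
      using card_e0 by (simp add: resistance_between_def sum_divide_distrib[symmetric] sum.distrib sum_subtractf)
    finally show ?thesis .
  qed
  ultimately show ?thesis using that by blast
qed


lemma sum_edges_resistance_between_vertex: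
  assumes "simple_graph H"
  shows "(\<Sum>f\<in>edges H. resistance_between H f {v}) = (\<Sum>s\<in>verts H. real (degree H s) * resistance H s v)"
  unfolding resistance_between_def using handshake[OF assms, of "\<lambda>s. resistance H s v"] by simp

lemma sum_edges_edges_resistance_between:
  assumes H: "simple_graph H"
  shows "(\<Sum>e\<in>edges H. \<Sum>f\<in>edges H. resistance_between H e f)
    = (\<Sum>s\<in>verts H. \<Sum>t\<in>verts H. real (degree H s) * real (degree H t) * resistance H s t)"
proof -
  have "(\<Sum>e\<in>edges H. \<Sum>f\<in>edges H. resistance_between H e f)
      = (\<Sum>e\<in>edges H. \<Sum>s\<in>e. \<Sum>f\<in>edges H. \<Sum>t\<in>f. resistance H s t)"
    unfolding resistance_between_def by (intro sum.cong refl) (rule sum.swap)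
  also have "\<dots> = (\<Sum>e\<in>edges H. \<Sum>s\<in>e. \<Sum>t\<in>verts H. real (degree H t) * resistance H s t)"
    using handshake[OF H] by simp
  also have "\<dots> = (\<Sum>s\<in>verts H. real (degree H s) * (\<Sum>t\<in>verts H. real (degree H t) * resistance H s t))"
    by (rule handshake[OF H])
  finally show ?thesis by (simp add: sum_distrib_left mult.assoc)
qed


section \<open>Subdividing a graph once\<close>

definition mid :: "'a svert set \<Rightarrow> 'a svert" where
  "mid e = Mid (Abs_fset e)"

definition edge_of :: "'a svert \<Rightarrow> 'a svert set" where
  "edge_of y = (case y of Mid s \<Rightarrow> fset s | Orig _ \<Rightarrow> {})"

lemma mid_inj: "finite e1 \<Longrightarrow> finite e2 \<Longrightarrow> mid e1 = mid e2 \<Longrightarrow> e1 = e2"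
  unfolding mid_def by (simp add: Abs_fset_inject)

lemma edge_of_mid: "finite e \<Longrightarrow> edge_of (mid e) = e"
  unfolding mid_def edge_of_def by (simp add: Abs_fset_inverse)

lemma verts_subdivision: "verts (subdivision H) = verts H \<union> mid ` edges H"
  by (simp add: subdivision_def verts_def mid_def)

lemma edges_subdivision: "edges (subdivision H) = {{u, mid e} | u e. e \<in> edges H \<and> u \<in> e}"
  by (simp add: subdivision_def edges_def mid_def)

locale fresh_subdivision =
  fixes H :: "'a svert graph"
  assumes connected: "connected_graph H"
    and nonempty: "verts H \<noteq> {}"
    and fresh: "\<forall>e\<in>edges H. mid e \<notin> verts H"
begin

abbreviation S :: "'a svert graph" where
  "S \<equiv> subdivision H"

lemma simple: "simple_graph H"
  using connected by (simp add: connected_graph_def)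

lemma mid_neq_vertex: "e \<in> edges H \<Longrightarrow> v \<in> verts H \<Longrightarrow> mid e \<noteq> v"
  using fresh by blast

lemma mid_eq_iff: "e1 \<in> edges H \<Longrightarrow> e2 \<in> edges H \<Longrightarrow> mid e1 = mid e2 \<longleftrightarrow> e1 = e2"
  using mid_inj finite_edge[OF simple] by metis

lemma inj_on_mid: "inj_on mid (edges H)"
  unfolding inj_on_def using mid_eq_iff by blast

lemma adj_subdivision_vertex:
  assumes v: "v \<in> verts H"
  shows "adj S v y \<longleftrightarrow> (\<exists>e\<in>edges H. v \<in> e \<and> y = mid e)"
proof
  assume "adj S v y"
  then obtain u e where ue: "{v, y} = {u, mid e}" "e \<in> edges H" "u \<in> e"
    by (auto simp: adj_def edges_subdivision)
  then have "v = u \<and> y = mid e \<or> v = mid e \<and> y = u" by (simp add: doubleton_eq_iff)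
  then show "\<exists>e\<in>edges H. v \<in> e \<and> y = mid e" using ue v mid_neq_vertex by metis
qed (auto simp: adj_def edges_subdivision)

lemma adj_subdivision_mid:
  assumes e0: "e0 \<in> edges H"
  shows "adj S (mid e0) y \<longleftrightarrow> y \<in> e0"
proof
  assume "adj S (mid e0) y"
  then obtain u e where ue: "{mid e0, y} = {u, mid e}" "e \<in> edges H" "u \<in> e"
    by (auto simp: adj_def edges_subdivision)
  then have cases: "mid e0 = u \<and> y = mid e \<or> mid e0 = mid e \<and> y = u"
    by (simp add: doubleton_eq_iff)
  have "mid e0 \<noteq> u" using edge_subset_verts[OF simple ue(2)] ue(3) mid_neq_vertex[OF e0] by blast
  then show "y \<in> e0" using cases mid_eq_iff[OF e0 ue(2)] ue(3) by auto
next
  assume "y \<in> e0"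
  then show "adj S (mid e0) y" using e0 by (auto simp: adj_def edges_subdivision insert_commute)
qed

lemma neighbours_subdivision_vertex:
  "v \<in> verts H \<Longrightarrow> neighbours S v = mid ` {e\<in>edges H. v \<in> e}"
  using adj_subdivision_vertex by (auto simp: neighbours_def)

lemma neighbours_subdivision_mid: "e \<in> edges H \<Longrightarrow> neighbours S (mid e) = e"
  using adj_subdivision_mid by (auto simp: neighbours_def)

lemma simple_subdivision: "simple_graph S"
  unfolding simple_graph_def
proof (intro conjI ballI)
  show "finite (verts S)"
    using finite_verts[OF simple] finite_edges[OF simple] by (simp add: verts_subdivision)
next
  fix e' assume "e' \<in> edges S"
  then obtain u e where ue: "e' = {u, mid e}" "e \<in> edges H" "u \<in> e"
    by (auto simp: edges_subdivision)
  have u: "u \<in> verts H" using edge_subset_verts[OF simple ue(2)] ue(3) by blast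
  show "e' \<subseteq> verts S" using ue u by (auto simp: verts_subdivision)
  show "card e' = 2" using ue mid_neq_vertex[OF ue(2) u] by simp
qed

lemma connected_subdivision: "connected_graph S"
proof -
  have path: "(adj S)\<^sup>*\<^sup>* u v" if "(adj H)\<^sup>*\<^sup>* u v" for u v
    using that
  proof (induction rule: rtranclp_induct)
    case (step a b)
    have "{a, b} \<in> edges H" using step(2) by (simp add: adj_def)
    then have "adj S a (mid {a, b})" "adj S b (mid {a, b})"
      unfolding adj_def edges_subdivision by blast+
    then show ?case
      using rtranclp.rtrancl_into_rtrancl[OF rtranclp.rtrancl_into_rtrancl[OF step.IH]] adj_sym
      by metis
  qed simp
  have near: "\<exists>u\<in>verts H. (adj S)\<^sup>*\<^sup>* y u \<and> (adj S)\<^sup>*\<^sup>* u y" if y: "y \<in> verts S" for y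
  proof (cases "y \<in> verts H")
    case False
    then obtain e where e: "e \<in> edges H" "y = mid e" using y by (auto simp: verts_subdivision)
    obtain u where u: "u \<in> e" using edge_nonempty[OF simple e(1)] by blast
    then have "adj S y u" using adj_subdivision_mid[OF e(1)] e(2) by simp
    moreover from this have "adj S u y" by (rule adj_sym)
    moreover have "u \<in> verts H" using u edge_subset_verts[OF simple e(1)] by blast
    ultimately show ?thesis by (blast intro: r_into_rtranclp)
  qed blast
  show ?thesis
    unfolding connected_graph_def
  proof (intro conjI ballI simple_subdivision)
    fix x y assume x: "x \<in> verts S" and y: "y \<in> verts S"
    obtain u where u: "u \<in> verts H" "(adj S)\<^sup>*\<^sup>* x u" using near[OF x] by blast
    obtain v where v: "v \<in> verts H" "(adj S)\<^sup>*\<^sup>* v y" using near[OF y] by blast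
    have "(adj H)\<^sup>*\<^sup>* u v" using connected u(1) v(1) unfolding connected_graph_def by blast
    then have "(adj S)\<^sup>*\<^sup>* u v" by (rule path)
    then show "(adj S)\<^sup>*\<^sup>* x y" using u(2) v(2) by (meson rtranclp_trans)
  qed
qed

lemma laplacian_subdivision_vertex:
  "v \<in> verts H \<Longrightarrow> laplacian S x v = (\<Sum>e\<in>{e\<in>edges H. v \<in> e}. x v - x (mid e))"
  unfolding laplacian_def
  by (simp add: neighbours_subdivision_vertex sum.reindex inj_on_subset[OF inj_on_mid])

lemma laplacian_subdivision_mid:
  "e \<in> edges H \<Longrightarrow> laplacian S x (mid e) = (\<Sum>w\<in>e. x (mid e) - x w)"
  unfolding laplacian_def by (simp add: neighbours_subdivision_mid)

lemma card_verts_subdivision: "card (verts S) = card (verts H) + card (edges H)"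
proof -
  have "verts H \<inter> mid ` edges H = {}" using fresh by blast
  then show ?thesis
    using finite_verts[OF simple] finite_edges[OF simple] card_image[OF inj_on_mid]
    by (simp add: verts_subdivision card_Un_disjoint)
qed

lemma card_edges_subdivision: "card (edges S) = 2 * card (edges H)"
proof -
  have eq: "edges S = (\<lambda>(e, u). {u, mid e}) ` (SIGMA e:edges H. e)"
    by (auto simp: edges_subdivision)
  have inj: "inj_on (\<lambda>(e, u). {u, mid e}) (SIGMA e:edges H. e)"
  proof (rule inj_onI, clarify)
    fix e u e' u'
    assume a: "e \<in> edges H" "u \<in> e" "e' \<in> edges H" "u' \<in> e'" "{u, mid e} = {u', mid e'}"
    have u: "u \<in> verts H" "u' \<in> verts H" using edge_subset_verts[OF simple] a by blast+
    have "u = u' \<and> mid e = mid e' \<or> u = mid e' \<and> mid e = u'"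
      using a(5) by (simp add: doubleton_eq_iff)
    then have "u = u' \<and> mid e = mid e'" using u mid_neq_vertex a(1,3) by metis
    then show "e = e' \<and> u = u'" using mid_eq_iff a(1,3) by blast
  qed
  have "card (SIGMA e:edges H. e) = (\<Sum>e\<in>edges H. card e)"
    using finite_edges[OF simple] finite_edge[OF simple] by (simp add: card_SigmaI)
  also have "\<dots> = (\<Sum>e\<in>edges H. 2)" using card_edge[OF simple] by simp
  finally show ?thesis using eq card_image[OF inj] by simp
qed

lemma degree_subdivision_vertex: "v \<in> verts H \<Longrightarrow> degree S v = degree H v"
  using degree_eq_card_incident_edges[OF simple, of v]
  by (simp add: degree_eq_card_neighbours neighbours_subdivision_vertex
      card_image inj_on_subset[OF inj_on_mid])

lemma degree_subdivision_mid: "e \<in> edges H \<Longrightarrow> degree S (mid e) = 2"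
  by (simp add: degree_eq_card_neighbours neighbours_subdivision_mid card_edge[OF simple])

lemma sum_verts_subdivision:
  "(\<Sum>y\<in>verts S. f y) = (\<Sum>v\<in>verts H. f v) + (\<Sum>e\<in>edges H. f (mid e))"
proof -
  have "verts H \<inter> mid ` edges H = {}" using fresh by blast
  then show ?thesis using finite_verts[OF simple] finite_edges[OF simple]
    by (simp add: verts_subdivision sum.union_disjoint sum.reindex[OF inj_on_mid])
qed

end

context fresh_subdivision
begin

text \<open>A potential on H extends to S: it is doubled on the old vertices, and the new vertex of
  an edge gets the sum of its values at the two ends, so that no current leaves it.\<close>

definition extend :: "('a svert \<Rightarrow> real) \<Rightarrow> 'a svert \<Rightarrow> real" where
  "extend x y = (if y \<in> verts H then 2 * x y else (\<Sum>w\<in>edge_of y. x w))"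

lemma extend_vertex: "v \<in> verts H \<Longrightarrow> extend x v = 2 * x v"
  by (simp add: extend_def)

lemma extend_mid: "e \<in> edges H \<Longrightarrow> extend x (mid e) = (\<Sum>w\<in>e. x w)"
  using fresh finite_edge[OF simple] by (simp add: extend_def edge_of_mid)

lemma laplacian_extend_vertex:
  assumes v: "v \<in> verts H"
  shows "laplacian S (extend x) v = laplacian H x v"
proof -
  have "laplacian S (extend x) v = (\<Sum>e\<in>{e\<in>edges H. v \<in> e}. 2 * x v - (\<Sum>w\<in>e. x w))"
    using v by (simp add: laplacian_subdivision_vertex extend_vertex extend_mid)
  also have "\<dots> = (\<Sum>e\<in>{e\<in>edges H. v \<in> e}. \<Sum>w\<in>e. x v - x w)"
    by (rule sum.cong[OF refl]) (simp add: sum_subtractf card_edge[OF simple])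
  finally show ?thesis using laplacian_eq_sum_incident_edges[OF simple] by simp
qed

lemma laplacian_extend_mid:
  assumes e: "e \<in> edges H"
  shows "laplacian S (extend x) (mid e) = 0"
proof -
  have "laplacian S (extend x) (mid e) = (\<Sum>w\<in>e. (\<Sum>w\<in>e. x w) - 2 * x w)"
    using e edge_subset_verts[OF simple e]
    by (simp add: laplacian_subdivision_mid extend_mid extend_vertex subset_iff)
  then show ?thesis
    using card_edge[OF simple e] by (simp add: sum_subtractf sum_distrib_left[symmetric])
qed

lemma laplacian_indicator_mid_vertex:
  assumes v: "v \<in> verts H" and e0: "e0 \<in> edges H"
  shows "laplacian S (\<lambda>y. if y = mid e0 then 1 else 0) v = - (if v \<in> e0 then 1 else 0)"
proof -
  have "laplacian S (\<lambda>y. if y = mid e0 then 1 else 0) v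
      = (\<Sum>e\<in>{e\<in>edges H. v \<in> e}. - (if e = e0 then 1 else 0))"
    using v mid_neq_vertex[OF e0 v] mid_eq_iff[OF _ e0]
    by (simp add: laplacian_subdivision_vertex)
  also have "\<dots> = - (if v \<in> e0 then 1 else 0)"
    using finite_edges[OF simple] e0 by (simp add: sum_negf)
  finally show ?thesis .
qed

lemma laplacian_indicator_mid_mid:
  assumes e: "e \<in> edges H" and e0: "e0 \<in> edges H"
  shows "laplacian S (\<lambda>y. if y = mid e0 then 1 else 0) (mid e) = (if e = e0 then 2 else 0)"
proof -
  have "w \<noteq> mid e0" if "w \<in> e" for w
    using that edge_subset_verts[OF simple e] mid_neq_vertex[OF e0] by blast
  then have "laplacian S (\<lambda>y. if y = mid e0 then 1 else 0) (mid e) = (\<Sum>w\<in>e. if e = e0 then 1 else 0)"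
    by (simp add: laplacian_subdivision_mid[OF e] mid_eq_iff[OF e e0])
  then show ?thesis using card_edge[OF simple e] by simp
qed

lemma resistance_subdivision_vertex:
  assumes i: "i \<in> verts H" and j: "j \<in> verts H"
  shows "resistance S i j = 2 * resistance H i j"
proof -
  obtain x where x: "unit_potential H i j x" using connected_unit_potential_exists[OF connected i j] by blast
  have potential: "unit_potential S i j (extend x)"
    unfolding unit_potential_def
  proof
    fix y assume "y \<in> verts S"
    then consider "y \<in> verts H" | e where "e \<in> edges H" "y = mid e" by (auto simp: verts_subdivision)
    then show "laplacian S (extend x) y = (if y = i then 1 else 0) - (if y = j then 1 else 0)"
    proof cases
      case 1 then show ?thesis using x laplacian_extend_vertex by (simp add: unit_potential_def)
    next
      case 2 then show ?thesis using laplacian_extend_mid mid_neq_vertex[OF 2(1)] i j by simp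
    qed
  qed
  have "i \<in> verts S" "j \<in> verts S" using i j by (simp_all add: verts_subdivision)
  then show ?thesis
    using resistance_eq_unit_potential[OF connected_subdivision _ _ potential]
      resistance_eq_unit_potential[OF connected i j x] i j by (simp add: extend_vertex)
qed

end

context fresh_subdivision
begin

lemma unit_potential_subdivision_mid:
  assumes e0: "e0 \<in> edges H" and w: "w \<in> verts H"
  obtains y where "unit_potential S (mid e0) w y"
    "\<And>e. e \<in> edges H \<Longrightarrow> y (mid e) - y w
       = (2 * resistance_between H e0 {w} + 2 * resistance_between H e {w} - resistance_between H e0 e) / 4
         + (if e = e0 then 1/2 else 0)"
proof -
  \<comment> \<open>half a unit enters at each end of e0; the remaining half unit is routed through mid e0\<close>
  obtain z where lap_z: "\<forall>v\<in>verts H. laplacian H z v = (if v \<in> e0 then 1/2 else 0) - (if v = w then 1 else 0)"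
    and z: "\<And>t. t \<in> verts H \<Longrightarrow> z t - z w
       = (resistance_between H e0 {w} + 2 * resistance H t w - resistance_between H e0 {t}) / 4"
    using half_unit_current_potential[OF connected e0 w] by blast
  define y where "y t = extend z t + (1/2) * (if t = mid e0 then 1 else 0)" for t
  have y_eq: "y = (\<lambda>t. extend z t + (1/2) * (if t = mid e0 then 1 else 0))"
    by (simp add: y_def fun_eq_iff)
  have "unit_potential S (mid e0) w y"
    unfolding unit_potential_def
  proof
    fix t assume "t \<in> verts S"
    then consider "t \<in> verts H" | e where "e \<in> edges H" "t = mid e" by (auto simp: verts_subdivision)
    then show "laplacian S y t = (if t = mid e0 then 1 else 0) - (if t = w then 1 else 0)"
    proof cases
      case 1
      then show ?thesis
        unfolding y_eq laplacian_add laplacian_scale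
        using laplacian_extend_vertex laplacian_indicator_mid_vertex[OF 1 e0] lap_z mid_neq_vertex[OF e0 1]
        by auto
    next
      case 2
      then show ?thesis
        unfolding y_eq laplacian_add laplacian_scale
        using laplacian_extend_mid laplacian_indicator_mid_mid[OF 2(1) e0] mid_neq_vertex[OF 2(1) w]
          mid_eq_iff[OF 2(1) e0] by auto
    qed
  qed
  moreover have "y (mid e) - y w
      = (2 * resistance_between H e0 {w} + 2 * resistance_between H e {w} - resistance_between H e0 e) / 4
        + (if e = e0 then 1/2 else 0)" if e: "e \<in> edges H" for e
  proof -
    have e_verts: "e \<subseteq> verts H" and card_e: "card e = 2"
      using edge_subset_verts[OF simple e] card_edge[OF simple e] by auto
    have "y (mid e) - y w = (\<Sum>t\<in>e. z t - z w) + (if e = e0 then 1/2 else 0)"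
      using w mid_neq_vertex[OF e0 w] card_e
      by (simp add: y_def extend_mid[OF e] extend_vertex mid_eq_iff[OF e e0] sum_subtractf)
    also have "(\<Sum>t\<in>e. z t - z w) = (\<Sum>t\<in>e.
        (resistance_between H e0 {w} + 2 * resistance H t w - resistance_between H e0 {t}) / 4)"
      using e_verts z by (intro sum.cong) auto
    also have "\<dots> = (2 * resistance_between H e0 {w} + 2 * resistance_between H e {w}
        - resistance_between H e0 e) / 4"
      using card_e
      by (simp add: resistance_between_def sum_divide_distrib[symmetric] sum.distrib sum_subtractf
          sum_distrib_left[symmetric] sum.swap[of _ e0 e])
    finally show ?thesis .
  qed
  ultimately show ?thesis using that by blast
qed

lemma mid_in_verts_subdivision: "e \<in> edges H \<Longrightarrow> mid e \<in> verts S"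
  by (simp add: verts_subdivision)

lemma vertex_in_verts_subdivision: "v \<in> verts H \<Longrightarrow> v \<in> verts S"
  by (simp add: verts_subdivision)

lemma resistance_subdivision_mid_vertex:
  assumes e0: "e0 \<in> edges H" and w: "w \<in> verts H"
  shows "resistance S (mid e0) w = resistance_between H e0 {w} - resistance_between H e0 e0 / 4 + 1/2"
proof -
  obtain y where y: "unit_potential S (mid e0) w y"
    "\<And>e. e \<in> edges H \<Longrightarrow> y (mid e) - y w
       = (2 * resistance_between H e0 {w} + 2 * resistance_between H e {w} - resistance_between H e0 e) / 4
         + (if e = e0 then 1/2 else 0)"
    using unit_potential_subdivision_mid[OF e0 w] by blast
  show ?thesis
    using resistance_eq_unit_potential[OF connected_subdivision mid_in_verts_subdivision[OF e0]
        vertex_in_verts_subdivision[OF w] y(1)] y(2)[OF e0]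
    by simp
qed

lemma resistance_subdivision_vertex_mid:
  assumes e0: "e0 \<in> edges H" and w: "w \<in> verts H"
  shows "resistance S w (mid e0) = resistance_between H e0 {w} - resistance_between H e0 e0 / 4 + 1/2"
  using resistance_subdivision_mid_vertex[OF e0 w] resistance_sym[OF connected_subdivision
      mid_in_verts_subdivision[OF e0] vertex_in_verts_subdivision[OF w]]
  by simp

lemma resistance_subdivision_mid_mid:
  assumes e0: "e0 \<in> edges H" and e1: "e1 \<in> edges H"
  shows "resistance S (mid e0) (mid e1) = resistance_between H e0 e1 / 2
    - resistance_between H e0 e0 / 4 - resistance_between H e1 e1 / 4 + (if e0 = e1 then 0 else 1)"
proof -
  obtain w where "w \<in> e0" using edge_nonempty[OF simple e0] by blast
  then have w: "w \<in> verts H" using edge_subset_verts[OF simple e0] by blast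
  obtain y0 where y0: "unit_potential S (mid e0) w y0"
    "\<And>e. e \<in> edges H \<Longrightarrow> y0 (mid e) - y0 w
       = (2 * resistance_between H e0 {w} + 2 * resistance_between H e {w} - resistance_between H e0 e) / 4
         + (if e = e0 then 1/2 else 0)"
    using unit_potential_subdivision_mid[OF e0 w] by blast
  obtain y1 where y1: "unit_potential S (mid e1) w y1"
    "\<And>e. e \<in> edges H \<Longrightarrow> y1 (mid e) - y1 w
       = (2 * resistance_between H e1 {w} + 2 * resistance_between H e {w} - resistance_between H e1 e) / 4
         + (if e = e1 then 1/2 else 0)"
    using unit_potential_subdivision_mid[OF e1 w] by blast
  have "resistance S (mid e0) (mid e1)
      = (y0 (mid e0) - y0 w) - (y1 (mid e0) - y1 w) - (y0 (mid e1) - y0 w) + (y1 (mid e1) - y1 w)"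
    using resistance_eq_unit_potential[OF connected_subdivision mid_in_verts_subdivision[OF e0]
        mid_in_verts_subdivision[OF e1] unit_potential_diff[OF y0(1) y1(1)]] by simp
  moreover have "resistance_between H e1 e0 = resistance_between H e0 e1"
    using resistance_between_sym[OF connected] edge_subset_verts[OF simple] e0 e1 by metis
  ultimately show ?thesis
    using y0(2)[OF e0] y0(2)[OF e1] y1(2)[OF e0] y1(2)[OF e1]
    by (cases "e0 = e1") (simp_all add: field_simps)
qed

end

context fresh_subdivision
begin

abbreviation n :: real where "n \<equiv> real (card (verts H))"
abbreviation m :: real where "m \<equiv> real (card (edges H))"

lemma edge_resistance_sum: "(\<Sum>e\<in>edges H. resistance_between H e e) = 2 * (n - 1)"
  by (rule foster[OF connected nonempty])

lemma sum_resistance_subdivision_vertex_vertex: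
  "(\<Sum>v\<in>verts H. \<Sum>w\<in>verts H. real (degree H v) * resistance S v w) = 2 * Rplus H"
  unfolding Rplus_eq_sum_degree_resistance[OF connected] sum_distrib_left
  by (intro sum.cong refl) (simp add: resistance_subdivision_vertex)

lemma sum_degree_resistance_subdivision_vertex_vertex:
  "(\<Sum>v\<in>verts H. \<Sum>w\<in>verts H. real (degree H v) * real (degree H w) * resistance S v w) = 4 * Rstar H"
proof -
  have "(\<Sum>v\<in>verts H. \<Sum>w\<in>verts H. real (degree H v) * real (degree H w) * resistance S v w)
      = 2 * (\<Sum>v\<in>verts H. \<Sum>w\<in>verts H. real (degree H v) * real (degree H w) * resistance H v w)"
    unfolding sum_distrib_left by (intro sum.cong refl) (simp add: resistance_subdivision_vertex)
  then show ?thesis by (simp add: Rstar_eq_sum_degree_resistance)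
qed

lemma sum_edges_resistance_subdivision_mid_vertex:
  assumes w: "w \<in> verts H"
  shows "(\<Sum>e\<in>edges H. resistance S (mid e) w)
    = (\<Sum>s\<in>verts H. real (degree H s) * resistance H s w) + (m - n + 1) / 2"
proof -
  have "(\<Sum>e\<in>edges H. resistance S (mid e) w)
      = (\<Sum>e\<in>edges H. resistance_between H e {w}) - (\<Sum>e\<in>edges H. resistance_between H e e) / 4 + m / 2"
    using w by (simp add: resistance_subdivision_mid_vertex sum.distrib sum_subtractf sum_divide_distrib)
  then show ?thesis
    using edge_resistance_sum sum_edges_resistance_between_vertex[OF simple] by (simp add: field_simps)
qed

lemma sum_degree_resistance_subdivision_vertex_mid:
  "(\<Sum>v\<in>verts H. \<Sum>f\<in>edges H. real (degree H v) * resistance S v (mid f)) = 2 * Rstar H + m * (m - n + 1)"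
proof -
  have "(\<Sum>v\<in>verts H. \<Sum>f\<in>edges H. real (degree H v) * resistance S v (mid f))
      = (\<Sum>v\<in>verts H. real (degree H v) * (\<Sum>f\<in>edges H. resistance S (mid f) v))"
    by (simp add: resistance_subdivision_vertex_mid resistance_subdivision_mid_vertex sum_distrib_left)
  also have "\<dots> = (\<Sum>v\<in>verts H. real (degree H v) * (\<Sum>s\<in>verts H. real (degree H s) * resistance H s v)
      + real (degree H v) * ((m - n + 1) / 2))"
    by (intro sum.cong refl) (simp only: sum_edges_resistance_subdivision_mid_vertex distrib_left)
  also have "\<dots> = (\<Sum>v\<in>verts H. \<Sum>s\<in>verts H. real (degree H v) * real (degree H s) * resistance H s v)
      + (\<Sum>v\<in>verts H. real (degree H v)) * ((m - n + 1) / 2)"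
    by (simp only: sum.distrib sum_distrib_left sum_distrib_right mult.assoc)
  also have "(\<Sum>v\<in>verts H. \<Sum>s\<in>verts H. real (degree H v) * real (degree H s) * resistance H s v)
      = 2 * Rstar H"
    unfolding Rstar_eq_sum_degree_resistance by (subst sum.swap) (simp add: mult.commute)
  finally show ?thesis by (simp add: sum_degree[OF simple])
qed

lemma sum_degree_resistance_subdivision_mid_vertex:
  "(\<Sum>e\<in>edges H. \<Sum>w\<in>verts H. real (degree H w) * resistance S (mid e) w) = 2 * Rstar H + m * (m - n + 1)"
  unfolding sum_degree_resistance_subdivision_vertex_mid[symmetric]
  by (subst sum.swap) (simp add: resistance_subdivision_vertex_mid resistance_subdivision_mid_vertex)

lemma sum_resistance_subdivision_mid_vertex:
  "(\<Sum>e\<in>edges H. \<Sum>w\<in>verts H. resistance S (mid e) w) = Rplus H + n * (m - n + 1) / 2"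
proof -
  have "(\<Sum>e\<in>edges H. \<Sum>w\<in>verts H. resistance S (mid e) w)
      = (\<Sum>w\<in>verts H. \<Sum>s\<in>verts H. real (degree H s) * resistance H s w) + n * ((m - n + 1) / 2)"
    by (subst sum.swap) (simp add: sum_edges_resistance_subdivision_mid_vertex sum.distrib)
  also have "(\<Sum>w\<in>verts H. \<Sum>s\<in>verts H. real (degree H s) * resistance H s w) = Rplus H"
    unfolding Rplus_eq_sum_degree_resistance[OF connected] by (rule sum.swap)
  finally show ?thesis by simp
qed

lemma sum_resistance_subdivision_mid_mid:
  "(\<Sum>e\<in>edges H. \<Sum>f\<in>edges H. resistance S (mid e) (mid f)) = Rstar H - m * (n - 1) + m * m - m"
proof -
  have "(\<Sum>e\<in>edges H. \<Sum>f\<in>edges H. resistance S (mid e) (mid f))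
     = (\<Sum>e\<in>edges H. \<Sum>f\<in>edges H. resistance_between H e f / 2)
       - (\<Sum>e\<in>edges H. \<Sum>f\<in>edges H. resistance_between H e e / 4)
       - (\<Sum>e\<in>edges H. \<Sum>f\<in>edges H. resistance_between H f f / 4)
       + (\<Sum>e\<in>edges H. \<Sum>f\<in>edges H. if e = f then 0 else 1)"
    by (simp add: resistance_subdivision_mid_mid sum.distrib sum_subtractf)
  also have "(\<Sum>e\<in>edges H. \<Sum>f\<in>edges H. resistance_between H e f / 2) = Rstar H"
    using sum_edges_edges_resistance_between[OF simple]
    by (simp add: Rstar_eq_sum_degree_resistance sum_divide_distrib[symmetric])
  also have "(\<Sum>e\<in>edges H. \<Sum>f\<in>edges H. resistance_between H e e / 4) = m * (n - 1) / 2"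
    using edge_resistance_sum by (simp add: sum_divide_distrib[symmetric] sum_distrib_left[symmetric])
  also have "(\<Sum>e\<in>edges H. \<Sum>f\<in>edges H. resistance_between H f f / 4) = m * (n - 1) / 2"
    using edge_resistance_sum by (simp add: sum_divide_distrib[symmetric])
  also have "(\<Sum>e\<in>edges H. \<Sum>f\<in>edges H. if e = f then 0 else (1::real)) = m * m - m"
  proof -
    have "(\<Sum>f\<in>edges H. if e = f then 0 else (1::real)) = m - 1" if e: "e \<in> edges H" for e
    proof -
      have "(\<Sum>f\<in>edges H. if e = f then 0 else (1::real)) = (\<Sum>f\<in>edges H. 1 - (if e = f then 1 else 0))"
        by (intro sum.cong) auto
      then show ?thesis using e finite_edges[OF simple] by (simp add: sum_subtractf)
    qed
    then have "(\<Sum>e\<in>edges H. \<Sum>f\<in>edges H. if e = f then 0 else (1::real)) = (\<Sum>e\<in>edges H. m - 1)"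
      by (rule sum.cong[OF refl])
    then show ?thesis by (simp add: algebra_simps)
  qed
  finally show ?thesis by simp
qed

lemma Rplus_subdivision: "Rplus S = 4 * Rplus H + 4 * Rstar H + 3 * m * m - 2 * m * n + m - n * n + n"
proof -
  have "Rplus S = (\<Sum>x\<in>verts S. \<Sum>y\<in>verts S. real (degree S x) * resistance S x y)"
    by (rule Rplus_eq_sum_degree_resistance[OF connected_subdivision])
  also have "\<dots> = (\<Sum>v\<in>verts H. \<Sum>w\<in>verts H. real (degree H v) * resistance S v w)
      + (\<Sum>v\<in>verts H. \<Sum>f\<in>edges H. real (degree H v) * resistance S v (mid f))
      + 2 * (\<Sum>e\<in>edges H. \<Sum>w\<in>verts H. resistance S (mid e) w)
      + 2 * (\<Sum>e\<in>edges H. \<Sum>f\<in>edges H. resistance S (mid e) (mid f))"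
    by (simp add: sum_verts_subdivision sum.distrib degree_subdivision_vertex degree_subdivision_mid
        sum_distrib_left)
  finally show ?thesis
    unfolding sum_resistance_subdivision_vertex_vertex sum_degree_resistance_subdivision_vertex_mid
      sum_resistance_subdivision_mid_vertex sum_resistance_subdivision_mid_mid
    by (simp add: field_simps)
qed

lemma Rstar_subdivision: "Rstar S = 8 * Rstar H + 2 * m * (2 * m - 2 * n + 1)"
proof -
  have "Rstar S = (\<Sum>x\<in>verts S. \<Sum>y\<in>verts S. real (degree S x) * real (degree S y) * resistance S x y) / 2"
    by (rule Rstar_eq_sum_degree_resistance)
  also have "(\<Sum>x\<in>verts S. \<Sum>y\<in>verts S. real (degree S x) * real (degree S y) * resistance S x y)
      = (\<Sum>v\<in>verts H. \<Sum>w\<in>verts H. real (degree H v) * real (degree H w) * resistance S v w)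
      + 2 * (\<Sum>v\<in>verts H. \<Sum>f\<in>edges H. real (degree H v) * resistance S v (mid f))
      + 2 * (\<Sum>e\<in>edges H. \<Sum>w\<in>verts H. real (degree H w) * resistance S (mid e) w)
      + 4 * (\<Sum>e\<in>edges H. \<Sum>f\<in>edges H. resistance S (mid e) (mid f))"
    by (simp add: sum_verts_subdivision sum.distrib degree_subdivision_vertex degree_subdivision_mid
        sum_distrib_left algebra_simps)
  finally show ?thesis
    unfolding sum_degree_resistance_subdivision_vertex_vertex sum_degree_resistance_subdivision_vertex_mid
      sum_degree_resistance_subdivision_mid_vertex sum_resistance_subdivision_mid_mid
    by (simp add: algebra_simps)
qed

end

section \<open>Iterated subdivisions\<close>

lemma verts_lift_graph: "verts (lift_graph G) = Orig ` verts G"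
  by (simp add: lift_graph_def verts_def)

lemma edges_lift_graph: "edges (lift_graph G) = image Orig ` edges G"
  by (simp add: lift_graph_def edges_def)

lemma inj_Orig: "inj Orig"
  by (simp add: inj_def)

lemma inj_image_Orig: "inj (image Orig)"
  unfolding inj_def using inj_image_eq_iff[OF inj_Orig] by blast

lemma adj_lift_graph: "adj (lift_graph G) (Orig u) (Orig v) \<longleftrightarrow> adj G u v"
proof -
  have "{Orig u, Orig v} = Orig ` {u, v}" by simp
  then show ?thesis
    unfolding adj_def edges_lift_graph by (simp only: inj_image_mem_iff[OF inj_image_Orig])
qed

lemma neighbours_lift_graph: "neighbours (lift_graph G) (Orig v) = Orig ` neighbours G v"
proof -
  have "adj (lift_graph G) (Orig v) y \<Longrightarrow> y \<in> range Orig" for y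
    unfolding adj_def edges_lift_graph by auto
  then show ?thesis using adj_lift_graph by (fastforce simp: neighbours_def)
qed

lemma degree_lift_graph: "degree (lift_graph G) (Orig v) = degree G v"
  by (simp add: degree_eq_card_neighbours neighbours_lift_graph card_image inj_on_subset[OF inj_Orig])

lemma laplacian_lift_graph: "laplacian (lift_graph G) (case_svert x f) (Orig v) = laplacian G x v"
  unfolding laplacian_def neighbours_lift_graph by (simp add: sum.reindex inj_on_subset[OF inj_Orig])

lemma connected_lift_graph:
  assumes conn: "connected_graph G"
  shows "connected_graph (lift_graph G)"
proof -
  have G: "simple_graph G" using conn by (simp add: connected_graph_def)
  have path: "(adj (lift_graph G))\<^sup>*\<^sup>* (Orig u) (Orig v)" if "(adj G)\<^sup>*\<^sup>* u v" for u v
    using that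
  proof (induction rule: rtranclp_induct)
    case (step a b)
    then show ?case using adj_lift_graph by (metis rtranclp.rtrancl_into_rtrancl)
  qed simp
  have "simple_graph (lift_graph G)"
    unfolding simple_graph_def
  proof (intro conjI ballI)
    show "finite (verts (lift_graph G))" using finite_verts[OF G] by (simp add: verts_lift_graph)
  next
    fix e' assume "e' \<in> edges (lift_graph G)"
    then obtain e where e: "e \<in> edges G" "e' = Orig ` e" by (auto simp: edges_lift_graph)
    show "e' \<subseteq> verts (lift_graph G)" using e edge_subset_verts[OF G e(1)] by (auto simp: verts_lift_graph)
    show "card e' = 2" using e card_edge[OF G e(1)] by (simp add: card_image inj_on_subset[OF inj_Orig])
  qed
  then show ?thesis
    using conn path unfolding connected_graph_def by (auto simp: verts_lift_graph)
qed

lemma resistance_lift_graph: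
  assumes conn: "connected_graph G" and i: "i \<in> verts G" and j: "j \<in> verts G"
  shows "resistance (lift_graph G) (Orig i) (Orig j) = resistance G i j"
proof -
  obtain x where x: "unit_potential G i j x" using connected_unit_potential_exists[OF conn i j] by blast
  have "unit_potential (lift_graph G) (Orig i) (Orig j) (case_svert x (\<lambda>_. 0))"
    using x by (auto simp: unit_potential_def verts_lift_graph laplacian_lift_graph)
  moreover have "Orig i \<in> verts (lift_graph G)" "Orig j \<in> verts (lift_graph G)"
    using i j by (auto simp: verts_lift_graph)
  ultimately show ?thesis
    using resistance_eq_unit_potential[OF connected_lift_graph[OF conn]] resistance_eq_unit_potential[OF conn i j x]
    by simp
qed

lemma Rplus_lift_graph:
  assumes conn: "connected_graph G"
  shows "Rplus (lift_graph G) = Rplus G"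
  unfolding Rplus_def verts_lift_graph
  by (simp add: sum.reindex inj_on_subset[OF inj_Orig], intro sum.cong refl,
      simp add: degree_lift_graph resistance_lift_graph[OF conn])

lemma Rstar_lift_graph:
  assumes conn: "connected_graph G"
  shows "Rstar (lift_graph G) = Rstar G"
  unfolding Rstar_def verts_lift_graph
  by (simp add: sum.reindex inj_on_subset[OF inj_Orig], intro sum.cong refl,
      simp add: degree_lift_graph resistance_lift_graph[OF conn])

lemma card_verts_lift_graph: "card (verts (lift_graph G)) = card (verts G)"
  by (simp add: verts_lift_graph card_image inj_on_subset[OF inj_Orig])

lemma card_edges_lift_graph: "card (edges (lift_graph G)) = card (edges G)"
  by (simp add: edges_lift_graph card_image inj_on_subset[OF inj_image_Orig])

primrec depth :: "'a svert \<Rightarrow> nat" where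
  "depth (Orig a) = 0"
| "depth (Mid s) = Suc (Max (insert 0 (fset (fimage depth s))))"

text \<open>In the k-th subdivision every vertex has depth at most k and every edge has an end of
  depth k; hence the vertex subdividing an edge has depth k + 1 and is new.\<close>

definition at_level :: "nat \<Rightarrow> 'a svert graph \<Rightarrow> bool" where
  "at_level k H \<longleftrightarrow> (\<forall>v\<in>verts H. depth v \<le> k) \<and> (\<forall>e\<in>edges H. \<exists>x\<in>e. depth x = k)"

lemma depth_mid:
  assumes H: "simple_graph H" and level: "at_level k H" and e: "e \<in> edges H"
  shows "depth (mid e) = Suc k"
proof -
  have fin: "finite e" and e_verts: "e \<subseteq> verts H"
    using finite_edge[OF H e] edge_subset_verts[OF H e] by auto
  have "depth (mid e) = Suc (Max (insert 0 (depth ` e)))"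
    unfolding mid_def using fin by (simp add: fimage.rep_eq Abs_fset_inverse)
  moreover have "Max (insert 0 (depth ` e)) = k"
  proof (rule antisym)
    show "Max (insert 0 (depth ` e)) \<le> k" using fin e_verts level by (auto simp: at_level_def)
    obtain x where "x \<in> e" "depth x = k" using level e by (auto simp: at_level_def)
    then show "k \<le> Max (insert 0 (depth ` e))" using fin by (auto intro: Max_ge)
  qed
  ultimately show ?thesis by simp
qed

lemma at_level_fresh:
  assumes H: "simple_graph H" and level: "at_level k H"
  shows "\<forall>e\<in>edges H. mid e \<notin> verts H"
proof
  fix e assume "e \<in> edges H"
  then have "depth (mid e) = Suc k" by (rule depth_mid[OF H level])
  then show "mid e \<notin> verts H" using level by (auto simp: at_level_def)
qed

lemma at_level_subdivision:
  assumes H: "simple_graph H" and level: "at_level k H"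
  shows "at_level (Suc k) (subdivision H)"
  unfolding at_level_def
proof (intro conjI ballI)
  fix v assume "v \<in> verts (subdivision H)"
  then show "depth v \<le> Suc k"
    using level depth_mid[OF H level] by (auto simp: verts_subdivision at_level_def)
next
  fix e' assume "e' \<in> edges (subdivision H)"
  then obtain u e where "e' = {u, mid e}" "e \<in> edges H" by (auto simp: edges_subdivision)
  then show "\<exists>x\<in>e'. depth x = Suc k" using depth_mid[OF H level] by blast
qed

lemma iter_subdivision_Suc: "iter_subdivision (Suc k) G = subdivision (iter_subdivision k G)"
  by (simp add: iter_subdivision_def)

lemma fresh_subdivision_iter_subdivision:
  assumes conn: "connected_graph G" and nonempty: "verts G \<noteq> {}"
  shows "fresh_subdivision (iter_subdivision k G)"
proof -
  have "fresh_subdivision (iter_subdivision k G) \<and> at_level k (iter_subdivision k G)"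
  proof (induction k)
    case 0
    have level: "at_level 0 (lift_graph G)"
      using edge_nonempty conn by (fastforce simp: at_level_def verts_lift_graph edges_lift_graph connected_graph_def)
    have conn_lift: "connected_graph (lift_graph G)" by (rule connected_lift_graph[OF conn])
    then have "simple_graph (lift_graph G)" by (simp add: connected_graph_def)
    then have "fresh_subdivision (lift_graph G)"
      using conn_lift nonempty at_level_fresh[OF _ level] unfolding fresh_subdivision_def
      by (simp add: verts_lift_graph)
    then show ?case using level by (simp add: iter_subdivision_def)
  next
    case (Suc k)
    then interpret fresh_subdivision "iter_subdivision k G" by blast
    have level: "at_level (Suc k) S" using Suc at_level_subdivision[OF simple] by blast
    have "fresh_subdivision S"
      using connected_subdivision nonempty at_level_fresh[OF simple_subdivision level]
      unfolding fresh_subdivision_def by (simp add: verts_subdivision)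
    then show ?case using level by (simp add: iter_subdivision_Suc)
  qed
  then show ?thesis by blast
qed

lemma card_iter_subdivision:
  assumes conn: "connected_graph G" and nonempty: "verts G \<noteq> {}"
  shows "real (card (edges (iter_subdivision k G))) = 2 ^ k * real (card (edges G))"
    and "real (card (verts (iter_subdivision k G)))
      = real (card (verts G)) + (2 ^ k - 1) * real (card (edges G))"
proof (induction k)
  case 0
  { case 1 show ?case by (simp add: iter_subdivision_def card_edges_lift_graph) }
  { case 2 show ?case by (simp add: iter_subdivision_def card_verts_lift_graph) }
next
  case (Suc k)
  interpret fresh_subdivision "iter_subdivision k G"
    by (rule fresh_subdivision_iter_subdivision[OF conn nonempty])
  { case 1 show ?case using Suc.IH(1) by (simp add: iter_subdivision_Suc card_edges_subdivision) }
  { case 2 show ?case using Suc.IH by (simp add: iter_subdivision_Suc card_verts_subdivision algebra_simps) }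
qed

lemma Rstar_iter_subdivision:
  assumes conn: "connected_graph G" and nonempty: "verts G \<noteq> {}"
  shows "Rstar (iter_subdivision k G) = 8 ^ k * Rstar G
    + (8 ^ k - 2 ^ k) / 3 * real (card (edges G))
      * (2 * real (card (edges G)) - 2 * real (card (verts G)) + 1)"
proof (induction k)
  case 0
  show ?case by (simp add: iter_subdivision_def Rstar_lift_graph[OF conn])
next
  case (Suc k)
  have fresh: "fresh_subdivision (iter_subdivision k G)"
    by (rule fresh_subdivision_iter_subdivision[OF conn nonempty])
  show ?case
    unfolding iter_subdivision_Suc fresh_subdivision.Rstar_subdivision[OF fresh] Suc.IH card_iter_subdivision[OF conn nonempty]
    by (simp add: field_simps)
qed

theorem theorem3p3:
  fixes G :: "'a graph" and k :: nat
  assumes "connected_graph G"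
    and "card (verts G) \<ge> 2"
  shows "Rplus (iter_subdivision k G) =
      4 ^ k * Rplus G + (8 ^ k - 4 ^ k) * Rstar G
      + (8 ^ k - 2 ^ k) / 3 * real (card (edges G))
          * (2 * real (card (edges G)) - 2 * real (card (verts G)) + 1)
      - (4 ^ k - 1) / 3 * (real (card (edges G)) - real (card (verts G)))
          * (real (card (edges G)) - real (card (verts G)) + 1)"
proof (induction k)
  case 0
  show ?case by (simp add: iter_subdivision_def Rplus_lift_graph[OF assms(1)])
next
  case (Suc k)
  have nonempty: "verts G \<noteq> {}" using assms(2) by auto
  have fresh: "fresh_subdivision (iter_subdivision k G)"
    by (rule fresh_subdivision_iter_subdivision[OF assms(1) nonempty])
  have powers: "(4::real) ^ k = 2 ^ k * 2 ^ k" "(8::real) ^ k = 2 ^ k * 2 ^ k * 2 ^ k"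
    by (simp_all flip: power_mult_distrib)
  show ?case
    unfolding iter_subdivision_Suc fresh_subdivision.Rplus_subdivision[OF fresh] Suc.IH Rstar_iter_subdivision[OF assms(1) nonempty]
      card_iter_subdivision[OF assms(1) nonempty]
    by (simp add: powers field_simps)
qed

end
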